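(* Let $0\le\alpha\le\tfrac12$, let $X$ be uniformly distributed on $\{-1,1\}^n$, and let $Y_i=X_iZ_i$ for $i=1,\dots,n$, where $Z_1,\dots,Z_n$ are i.i.d., independent of $X$, with $\Pr(Z_i=-1)=\alpha$, $\Pr(Z_i=1)=1-\alpha$. For a Boolean function $f:\{-1,1\}^n\to\{-1,1\}$ and $y\in\{-1,1\}^n$ let $P_y^f=\Pr(f(X)=-1\mid Y=y)$. Let $k\ge1$ be an integer satisfying $(1-2\alpha)\sqrt{2k-1}\le 1$. Then for any balanced Boolean function $f:\{-1,1\}^n\to\{-1,1\}$ (i.e., $\Pr(f(X)=-1)=\tfrac12$), \[ \mathbb{E}_Y\left((1-2P_Y^{f})^{2k}\right)\le (2k-1)^{k}(1-2\alpha)^{2k}. \] *)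

theory Defs
  imports "HOL-Library.FuncSet" Complex_Main
begin

text \<open>The hypercube {-1,1}^n, points are functions on {0..<n} (undefined elsewhere).\<close>
definition cube :: "nat \<Rightarrow> (nat \<Rightarrow> int) set" where
  "cube n = PiE {..<n} (\<lambda>_. {-1, 1})"

text \<open>Joint law of (X,Y): X uniform on the cube, Y_i = X_i Z_i with Z_i i.i.d.,
  P(Z_i = -1) = alpha, independent of X.  Hence
  Pr(X = x, Y = y) = 2^-n * prod_i (if x_i = y_i then 1 - alpha else alpha).\<close>
definition joint_prob :: "real \<Rightarrow> nat \<Rightarrow> (nat \<Rightarrow> int) \<Rightarrow> (nat \<Rightarrow> int) \<Rightarrow> real" where
  "joint_prob \<alpha> n x y = (1 / 2 ^ n) * (\<Prod>i<n. if x i = y i then 1 - \<alpha> else \<alpha>)"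

definition probY :: "real \<Rightarrow> nat \<Rightarrow> (nat \<Rightarrow> int) \<Rightarrow> real" where
  "probY \<alpha> n y = (\<Sum>x\<in>cube n. joint_prob \<alpha> n x y)"

definition condP :: "real \<Rightarrow> nat \<Rightarrow> ((nat \<Rightarrow> int) \<Rightarrow> int) \<Rightarrow> (nat \<Rightarrow> int) \<Rightarrow> real" where
  "condP \<alpha> n f y = (\<Sum>x\<in>{x\<in>cube n. f x = -1}. joint_prob \<alpha> n x y) / probY \<alpha> n y"

definition boolean_fun :: "nat \<Rightarrow> ((nat \<Rightarrow> int) \<Rightarrow> int) \<Rightarrow> bool" where
  "boolean_fun n f \<longleftrightarrow> (\<forall>x\<in>cube n. f x \<in> {-1, 1})"

definition balanced :: "nat \<Rightarrow> ((nat \<Rightarrow> int) \<Rightarrow> int) \<Rightarrow> bool" where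
  "balanced n f \<longleftrightarrow> real (card {x\<in>cube n. f x = -1}) / 2 ^ n = 1 / 2"

end

theory Submission
  imports Defs "HOL-Analysis.Convex"
begin

text \<open>
  With \<open>\<rho> = 1 - 2\<alpha>\<close>, the quantity \<open>1 - 2P\<^sub>y\<^sup>f\<close> is the noise operator \<open>T\<^sub>\<rho>\<close> applied to
  \<open>f\<close> and evaluated at \<open>y\<close>, and \<open>Y\<close> is uniform. Split \<open>\<rho> = \<sigma>\<tau>\<close> with
  \<open>\<sigma> = 1/\<surd>(2k-1)\<close> and \<open>\<tau> = \<rho>\<surd>(2k-1) \<le> 1\<close>. Hypercontractivity of the noise operator
  gives \<open>E (T\<^sub>\<rho> f)\<^sup>2\<^sup>k \<le> (E (T\<^sub>\<tau> f)\<^sup>2)\<^sup>k\<close>, and for balanced \<open>f\<close> the mean-zero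
  bound \<open>E (T\<^sub>\<tau> f)\<^sup>2 \<le> \<tau>\<^sup>2 E f\<^sup>2 = (2k-1)\<rho>\<^sup>2\<close> finishes the proof.
  Hypercontractivity is proved by induction on the dimension: the one-dimensional case is a
  binomial estimate, and the induction step combines it with Minkowski's inequality in \<open>L\<^sup>k\<close>.
\<close>

section \<open>Elementary inequalities\<close>

lemma convex_on_power_nonneg: "convex_on {0::real..} (\<lambda>x. x ^ n)"
proof (cases "even n")
  case True
  then show ?thesis
    by (rule convex_on_subset[OF convex_power_even]) auto
next
  case False
  then show ?thesis by (rule convex_power_odd)
qed

lemma power_add_le_weighted:
  fixes u v P Q :: real
  assumes "0 \<le> u" "0 \<le> v" "0 < P" "0 < Q" "m \<ge> 1"
  shows "(u + v) ^ m \<le> ((P + Q) / P) ^ (m - 1) * u ^ m + ((P + Q) / Q) ^ (m - 1) * v ^ m"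
proof -
  obtain j where m: "m = Suc j" using assms(5) by (cases m) auto
  define t where "t = Q / (P + Q)"
  define x where "x = (P + Q) / P * u"
  define y where "y = (P + Q) / Q * v"
  have t: "0 \<le> t" "t \<le> 1" "1 - t = P / (P + Q)"
    using assms by (auto simp: t_def field_simps)
  have "(1 - t) * x = u" using assms by (simp add: t(3) x_def)
  moreover have "t * y = v" using assms by (simp add: t_def y_def)
  ultimately have "(u + v) ^ m = ((1 - t) *\<^sub>R x + t *\<^sub>R y) ^ m"
    by simp
  also have "\<dots> \<le> (1 - t) * x ^ m + t * y ^ m"
    using t assms by (intro convex_onD[OF convex_on_power_nonneg]) (auto simp: x_def y_def)
  also have "(1 - t) * x ^ m = ((1 - t) * ((P + Q) / P)) * ((P + Q) / P) ^ j * u ^ m"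
    by (simp only: x_def m power_mult_distrib power_Suc mult_ac)
  also have "\<dots> = ((P + Q) / P) ^ (m - 1) * u ^ m"
    using assms by (simp add: t(3) m)
  also have "t * y ^ m = (t * ((P + Q) / Q)) * ((P + Q) / Q) ^ j * v ^ m"
    by (simp only: y_def m power_mult_distrib power_Suc mult_ac)
  also have "\<dots> = ((P + Q) / Q) ^ (m - 1) * v ^ m"
    using assms by (simp add: t_def m)
  finally show ?thesis .
qed

lemma minkowski_power_sum:
  fixes w u v :: "'a \<Rightarrow> real" and P Q :: real
  assumes "finite I" and "m \<ge> 1" and "0 \<le> P" and "0 \<le> Q"
    and nonneg: "\<And>i. i \<in> I \<Longrightarrow> 0 \<le> w i \<and> 0 \<le> u i \<and> 0 \<le> v i"
    and u: "(\<Sum>i\<in>I. w i * u i ^ m) \<le> P ^ m"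
    and v: "(\<Sum>i\<in>I. w i * v i ^ m) \<le> Q ^ m"
  shows "(\<Sum>i\<in>I. w i * (u i + v i) ^ m) \<le> (P + Q) ^ m"
proof -
  have vanish: "w i * h i = 0"
    if "\<And>i. i \<in> I \<Longrightarrow> 0 \<le> h i" "(\<Sum>i\<in>I. w i * h i) \<le> 0" "i \<in> I" for h i
    using that nonneg sum_nonneg_eq_0_iff[OF \<open>finite I\<close>, of "\<lambda>i. w i * h i"]
    by (metis (no_types, lifting) antisym mult_nonneg_nonneg sum_nonneg)
  consider "P = 0" | "Q = 0" | "0 < P" "0 < Q"
    using assms by fastforce
  then show ?thesis
  proof cases
    case 1
    have "(\<Sum>i\<in>I. w i * u i ^ m) \<le> 0" using u 1 assms(2) by (simp add: zero_power)
    then have "w i = 0 \<or> u i = 0" if "i \<in> I" for i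
      using vanish[of "\<lambda>i. u i ^ m"] nonneg that by auto
    then have "(\<Sum>i\<in>I. w i * (u i + v i) ^ m) = (\<Sum>i\<in>I. w i * v i ^ m)"
      by (intro sum.cong refl) (metis add_0 mult_zero_left)
    then show ?thesis using v 1 by simp
  next
    case 2
    have "(\<Sum>i\<in>I. w i * v i ^ m) \<le> 0" using v 2 assms(2) by (simp add: zero_power)
    then have "w i = 0 \<or> v i = 0" if "i \<in> I" for i
      using vanish[of "\<lambda>i. v i ^ m"] nonneg that by auto
    then have "(\<Sum>i\<in>I. w i * (u i + v i) ^ m) = (\<Sum>i\<in>I. w i * u i ^ m)"
      by (intro sum.cong refl) (metis add_0_right mult_zero_left)
    then show ?thesis using u 2 by simp
  next
    case 3
    define a where "a = ((P + Q) / P) ^ (m - 1)"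
    define b where "b = ((P + Q) / Q) ^ (m - 1)"
    have "(\<Sum>i\<in>I. w i * (u i + v i) ^ m) \<le> (\<Sum>i\<in>I. w i * (a * u i ^ m + b * v i ^ m))"
      using nonneg 3 assms(2) unfolding a_def b_def
      by (intro sum_mono mult_left_mono power_add_le_weighted) auto
    also have "\<dots> = a * (\<Sum>i\<in>I. w i * u i ^ m) + b * (\<Sum>i\<in>I. w i * v i ^ m)"
      by (simp add: algebra_simps sum.distrib sum_distrib_left)
    also have "\<dots> \<le> a * P ^ m + b * Q ^ m"
      using u v 3 by (intro add_mono mult_left_mono) (auto simp: a_def b_def)
    also have "\<dots> = (P + Q) ^ m"
      using 3 assms(2) by (cases m) (auto simp: a_def b_def power_divide field_simps)
    finally show ?thesis .
  qed
qed

lemma Suc_times_binomial_real: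
  "(real k + 1) * real (n choose Suc k) = (real n - real k) * real (n choose k)"
proof -
  have "real (Suc k * (n choose Suc k)) = real ((n - k) * (n choose k))"
    by (simp only: binomial_absorption binomial_absorb_comp)
  then show ?thesis
    by (cases "k \<le> n") (auto simp: of_nat_diff binomial_eq_0 algebra_simps)
qed

lemma binomial_double_le:
  assumes "i \<le> k"
  shows "real (2 * k choose (2 * i)) \<le> real (k choose i) * (2 * real k - 1) ^ i"
  using assms
proof (induction i)
  case 0
  then show ?case by simp
next
  case (Suc i)
  define R where "R = 2 * real k - 1"
  define a0 where "a0 = real (2 * k choose (2 * i))"
  define a1 where "a1 = real (2 * k choose Suc (2 * i))"
  define a2 where "a2 = real (2 * k choose (2 * Suc i))"
  define b0 where "b0 = real (k choose i)"
  define b1 where "b1 = real (k choose Suc i)"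
  have R: "1 \<le> R" "2 * real k - 2 * real i - 1 \<le> (2 * real i + 1) * R"
    using Suc.prems by (auto simp: R_def algebra_simps)
  have a1: "(2 * real i + 1) * a1 = (2 * real k - 2 * real i) * a0"
    using Suc_times_binomial_real[of "2 * i" "2 * k"] by (simp add: a0_def a1_def)
  have a2: "(2 * real i + 2) * a2 = (2 * real k - 2 * real i - 1) * a1"
    using Suc_times_binomial_real[of "Suc (2 * i)" "2 * k"]
    by (simp add: a1_def a2_def algebra_simps)
  have "(real i + 1) * b1 = (real k - real i) * b0"
    using Suc_times_binomial_real[of i k] by (simp add: b0_def b1_def)
  then have b: "(2 * real k - 2 * real i) * b0 = (2 * real i + 2) * b1"
    by (simp add: algebra_simps)
  have "(2 * real i + 2) * ((2 * real i + 1) * a2)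
      = (2 * real i + 1) * ((2 * real k - 2 * real i - 1) * a1)"
    by (simp only: a2 mult.left_commute)
  also have "\<dots> = (2 * real k - 2 * real i - 1) * (2 * real k - 2 * real i) * a0"
    by (metis a1 mult.assoc mult.left_commute)
  also have "\<dots> \<le> (2 * real k - 2 * real i - 1) * (2 * real k - 2 * real i) * (b0 * R ^ i)"
    using Suc by (intro mult_left_mono) (auto simp: R_def a0_def b0_def)
  also have "\<dots> = (2 * real k - 2 * real i - 1) * R ^ i * ((2 * real k - 2 * real i) * b0)"
    by (simp only: mult_ac)
  also have "\<dots> = (2 * real k - 2 * real i - 1) * R ^ i * ((2 * real i + 2) * b1)"
    by (simp only: b)
  also have "\<dots> = (2 * real i + 2) * ((2 * real k - 2 * real i - 1) * b1 * R ^ i)"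
    by (simp only: mult_ac)
  finally have "(2 * real i + 1) * a2 \<le> (2 * real k - 2 * real i - 1) * b1 * R ^ i"
    by (simp add: mult_le_cancel_left_pos)
  also have "\<dots> \<le> (2 * real i + 1) * R * b1 * R ^ i"
    using R by (intro mult_right_mono) (auto simp: b1_def)
  also have "\<dots> = (2 * real i + 1) * (b1 * R ^ Suc i)"
    by (simp only: power_Suc mult_ac)
  finally have "a2 \<le> b1 * R ^ Suc i"
    by (simp add: mult_le_cancel_left_pos)
  then show ?case
    by (simp only: R_def a2_def b1_def)
qed

lemma sum_atMost_double:
  fixes h :: "nat \<Rightarrow> 'a::comm_monoid_add"
  shows "(\<Sum>j\<le>2 * k. h j) = (\<Sum>i\<le>k. h (2 * i)) + (\<Sum>i<k. h (2 * i + 1))"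
  by (induction k) (simp_all add: algebra_simps)

lemma two_point_hypercontractive:
  fixes A B \<sigma> :: real
  assumes "k \<ge> 1" and "\<sigma>\<^sup>2 * (2 * real k - 1) \<le> 1"
  shows "(A + \<sigma> * B) ^ (2 * k) + (A - \<sigma> * B) ^ (2 * k) \<le> 2 * (A\<^sup>2 + B\<^sup>2) ^ k"
proof -
  define h where "h j = real (2 * k choose j) * ((\<sigma> * B) ^ j + (- (\<sigma> * B)) ^ j) * A ^ (2 * k - j)"
    for j
  have "(A + \<sigma> * B) ^ (2 * k) + (A - \<sigma> * B) ^ (2 * k) = (\<Sum>j\<le>2 * k. h j)"
    using binomial_ring[of "\<sigma> * B" A "2 * k"] binomial_ring[of "- (\<sigma> * B)" A "2 * k"]
    by (simp add: h_def add.commute algebra_simps sum.distrib)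
  also have "\<dots> = (\<Sum>i\<le>k. h (2 * i)) + (\<Sum>i<k. h (2 * i + 1))"
    by (rule sum_atMost_double)
  also have "(\<Sum>i<k. h (2 * i + 1)) = 0"
    by (simp add: h_def)
  also have "(\<Sum>i\<le>k. h (2 * i)) \<le> (\<Sum>i\<le>k. 2 * (real (k choose i) * (B\<^sup>2) ^ i * (A\<^sup>2) ^ (k - i)))"
  proof (rule sum_mono)
    fix i assume "i \<in> {..k}"
    then have "i \<le> k" by simp
    have "real (2 * k choose (2 * i)) * (\<sigma>\<^sup>2) ^ i
        \<le> real (k choose i) * (2 * real k - 1) ^ i * (\<sigma>\<^sup>2) ^ i"
      using binomial_double_le[OF \<open>i \<le> k\<close>] by (intro mult_right_mono) auto
    also have "\<dots> = real (k choose i) * (\<sigma>\<^sup>2 * (2 * real k - 1)) ^ i"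
      by (simp add: power_mult_distrib)
    also have "\<dots> \<le> real (k choose i)"
      using assms by (intro mult_left_le power_le_one) auto
    finally have "real (2 * k choose (2 * i)) * (\<sigma>\<^sup>2) ^ i * ((B\<^sup>2) ^ i * (A\<^sup>2) ^ (k - i))
        \<le> real (k choose i) * ((B\<^sup>2) ^ i * (A\<^sup>2) ^ (k - i))"
      by (intro mult_right_mono) auto
    moreover have "h (2 * i)
        = 2 * (real (2 * k choose (2 * i)) * (\<sigma>\<^sup>2) ^ i * ((B\<^sup>2) ^ i * (A\<^sup>2) ^ (k - i)))"
      by (simp add: h_def power_mult power_mult_distrib diff_mult_distrib2[symmetric])
    ultimately show "h (2 * i) \<le> 2 * (real (k choose i) * (B\<^sup>2) ^ i * (A\<^sup>2) ^ (k - i))"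
      by (simp add: mult.assoc)
  qed
  also have "\<dots> = 2 * (A\<^sup>2 + B\<^sup>2) ^ k"
    using binomial_ring[of "B\<^sup>2" "A\<^sup>2" k] by (simp add: sum_distrib_left add.commute)
  finally show ?thesis by simp
qed

section \<open>The noise operator on the discrete cube\<close>

definition cube_mean :: "nat \<Rightarrow> ((nat \<Rightarrow> int) \<Rightarrow> real) \<Rightarrow> real" where
  "cube_mean n h = (\<Sum>x\<in>cube n. h x) / 2 ^ n"

definition noise_weight :: "real \<Rightarrow> int \<Rightarrow> int \<Rightarrow> real" where
  "noise_weight r a b = (1 + r * of_int a * of_int b) / 2"

text \<open>
  \<open>noise r n g y\<close> is \<open>E[g(X) | Y = y]\<close> for \<open>X\<close> uniform and \<open>Y\<close> an \<open>r\<close>-correlated copy of \<open>X\<close>: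
  each coordinate of \<open>x\<close> agrees with \<open>y\<close> with weight \<open>(1 + r)/2\<close> and disagrees with weight
  \<open>(1 - r)/2\<close>.
\<close>
definition noise :: "real \<Rightarrow> nat \<Rightarrow> ((nat \<Rightarrow> int) \<Rightarrow> real) \<Rightarrow> (nat \<Rightarrow> int) \<Rightarrow> real" where
  "noise r n g y = (\<Sum>x\<in>cube n. g x * (\<Prod>i<n. noise_weight r (x i) (y i)))"

text \<open>On the cube \<open>g x = coord_avg i g x + x\<^sub>i * coord_diff i g x\<close>.\<close>
definition coord_avg :: "nat \<Rightarrow> ((nat \<Rightarrow> int) \<Rightarrow> real) \<Rightarrow> (nat \<Rightarrow> int) \<Rightarrow> real" where
  "coord_avg i g x = (g (x(i := 1)) + g (x(i := -1))) / 2"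

definition coord_diff :: "nat \<Rightarrow> ((nat \<Rightarrow> int) \<Rightarrow> real) \<Rightarrow> (nat \<Rightarrow> int) \<Rightarrow> real" where
  "coord_diff i g x = (g (x(i := 1)) - g (x(i := -1))) / 2"

lemma finite_cube: "finite (cube n)"
  by (simp add: cube_def finite_PiE)

lemma card_cube: "card (cube n) = 2 ^ n"
  by (simp add: cube_def card_PiE numeral_2_eq_2)

lemma cube_0: "cube 0 = {\<lambda>_. undefined}"
  by (simp add: cube_def)

lemma sum_cube_Suc:
  "(\<Sum>z\<in>cube (Suc n). h z) = (\<Sum>x\<in>cube n. h (x(n := 1)) + h (x(n := -1)))"
proof -
  have cube_Suc: "cube (Suc n) = (\<lambda>(t, x). x(n := t)) ` ({-1, 1} \<times> cube n)"
    unfolding cube_def lessThan_Suc by (rule PiE_insert_eq)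
  have inj: "inj_on (\<lambda>(t, x). x(n := t)) ({-1::int, 1} \<times> cube n)"
    unfolding cube_def by (rule inj_combinator) simp
  have "(\<Sum>z\<in>cube (Suc n). h z) = (\<Sum>(t, x)\<in>{-1::int, 1} \<times> cube n. h (x(n := t)))"
    unfolding cube_Suc by (subst sum.reindex[OF inj]) (simp add: case_prod_unfold)
  also have "\<dots> = (\<Sum>t\<in>{-1::int, 1}. \<Sum>x\<in>cube n. h (x(n := t)))"
    by (rule sum.cartesian_product[symmetric])
  finally show ?thesis
    by (simp add: sum.distrib add.commute)
qed

lemma cube_mean_0: "cube_mean 0 h = h (\<lambda>_. undefined)"
  by (simp add: cube_mean_def cube_0)

lemma cube_mean_Suc:
  "cube_mean (Suc n) h = cube_mean n (\<lambda>x. (h (x(n := 1)) + h (x(n := -1))) / 2)"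
  by (simp add: cube_mean_def sum_cube_Suc sum_divide_distrib[symmetric])

lemma cube_mean_add: "cube_mean n (\<lambda>x. g x + h x) = cube_mean n g + cube_mean n h"
  by (simp add: cube_mean_def sum.distrib add_divide_distrib)

lemma cube_mean_mult_left: "cube_mean n (\<lambda>x. c * h x) = c * cube_mean n h"
  by (simp add: cube_mean_def sum_distrib_left)

lemma cube_mean_mono:
  "(\<And>x. x \<in> cube n \<Longrightarrow> g x \<le> h x) \<Longrightarrow> cube_mean n g \<le> cube_mean n h"
  unfolding cube_mean_def by (intro divide_right_mono sum_mono) auto

lemma cube_mean_nonneg: "(\<And>x. x \<in> cube n \<Longrightarrow> 0 \<le> h x) \<Longrightarrow> 0 \<le> cube_mean n h"
  unfolding cube_mean_def by (intro divide_nonneg_pos sum_nonneg) auto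

lemma cube_mean_eq_sum: "cube_mean n h = (\<Sum>x\<in>cube n. (1 / 2 ^ n) * h x)"
  by (simp add: cube_mean_def sum_divide_distrib)

lemma cube_mean_Suc_coord: "cube_mean (Suc n) g = cube_mean n (coord_avg n g)"
  by (simp add: cube_mean_Suc coord_avg_def[abs_def])

lemma cube_mean_Suc_square:
  "cube_mean (Suc n) (\<lambda>x. (g x)\<^sup>2)
     = cube_mean n (\<lambda>x. (coord_avg n g x)\<^sup>2) + cube_mean n (\<lambda>x. (coord_diff n g x)\<^sup>2)"
proof -
  have "(coord_avg n g x)\<^sup>2 + (coord_diff n g x)\<^sup>2 = ((g (x(n := 1)))\<^sup>2 + (g (x(n := -1)))\<^sup>2) / 2"
    for x
    by (simp add: coord_avg_def coord_diff_def power2_eq_square field_simps)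
  then show ?thesis
    by (simp only: cube_mean_Suc cube_mean_add[symmetric])
qed

lemma noise_0: "noise r 0 g y = g (\<lambda>_. undefined)"
  by (simp add: noise_def cube_0)

lemma noise_const: "noise r n (\<lambda>_. c) y = c"
proof (induction n)
  case 0
  show ?case by (simp add: noise_0)
next
  case (Suc n)
  have "(\<Prod>i<n. noise_weight r ((x(n := t)) i) (y i)) = (\<Prod>i<n. noise_weight r (x i) (y i))"
    for x and t :: int
    by (intro prod.cong) auto
  then show ?case
    using Suc by (simp add: noise_def sum_cube_Suc sum.distrib sum_distrib_left[symmetric]
        noise_weight_def field_simps)
qed

lemma noise_fun_upd_dim: "noise r n g (y(n := t)) = noise r n g y"
  unfolding noise_def by (intro sum.cong refl arg_cong2[where f = "(*)"] prod.cong) auto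

lemma noise_Suc:
  "noise r (Suc n) g y
     = noise r n (coord_avg n g) y + r * of_int (y n) * noise r n (coord_diff n g) y"
proof -
  define W where "W x = (\<Prod>i<n. noise_weight r (x i) (y i))" for x
  have W: "(\<Prod>i<n. noise_weight r ((x(n := t)) i) (y i)) = W x" for x and t :: int
    unfolding W_def by (intro prod.cong) auto
  show ?thesis
    unfolding noise_def sum_cube_Suc prod.lessThan_Suc W
    by (simp add: W_def coord_avg_def coord_diff_def noise_weight_def sum_distrib_left
        sum.distrib sum_subtractf sum_divide_distrib[symmetric] field_simps)
qed

lemma cube_mean_noise_Suc:
  "cube_mean (Suc n) (\<lambda>z. F (noise r (Suc n) g z))
     = cube_mean n (\<lambda>y. (F (noise r n (coord_avg n g) y + r * noise r n (coord_diff n g) y)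
                         + F (noise r n (coord_avg n g) y - r * noise r n (coord_diff n g) y)) / 2)"
  by (simp add: cube_mean_Suc noise_Suc noise_fun_upd_dim)

lemma cube_mean_noise_Suc_square:
  "cube_mean (Suc n) (\<lambda>z. (noise r (Suc n) g z)\<^sup>2)
     = cube_mean n (\<lambda>y. (noise r n (coord_avg n g) y)\<^sup>2)
       + r\<^sup>2 * cube_mean n (\<lambda>y. (noise r n (coord_diff n g) y)\<^sup>2)"
proof -
  have "((a + r * b)\<^sup>2 + (a - r * b)\<^sup>2) / 2 = a\<^sup>2 + r\<^sup>2 * b\<^sup>2" for a b :: real
    by (simp add: power2_eq_square algebra_simps)
  then show ?thesis
    by (simp only: cube_mean_noise_Suc[where F = "\<lambda>t. t\<^sup>2"] cube_mean_add cube_mean_mult_left)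
qed

lemma cube_mean_noise_square_le:
  assumes "r\<^sup>2 \<le> 1"
  shows "cube_mean n (\<lambda>y. (noise r n g y)\<^sup>2) \<le> cube_mean n (\<lambda>x. (g x)\<^sup>2)"
proof (induction n arbitrary: g)
  case 0
  show ?case by (simp add: cube_mean_0 noise_0)
next
  case (Suc n)
  let ?d = "cube_mean n (\<lambda>y. (noise r n (coord_diff n g) y)\<^sup>2)"
  have "r\<^sup>2 * ?d \<le> ?d"
    using assms by (intro mult_left_le_one_le cube_mean_nonneg) auto
  then show ?case
    using Suc.IH[of "coord_avg n g"] Suc.IH[of "coord_diff n g"]
    by (simp add: cube_mean_noise_Suc_square cube_mean_Suc_square)
qed

lemma cube_mean_noise_square_le_variance:
  assumes "r\<^sup>2 \<le> 1"
  shows "cube_mean n (\<lambda>y. (noise r n g y)\<^sup>2)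
           \<le> (1 - r\<^sup>2) * (cube_mean n g)\<^sup>2 + r\<^sup>2 * cube_mean n (\<lambda>x. (g x)\<^sup>2)"
proof (induction n arbitrary: g)
  case 0
  show ?case by (simp add: cube_mean_0 noise_0 algebra_simps)
next
  case (Suc n)
  have "r\<^sup>2 * cube_mean n (\<lambda>y. (noise r n (coord_diff n g) y)\<^sup>2)
          \<le> r\<^sup>2 * cube_mean n (\<lambda>x. (coord_diff n g x)\<^sup>2)"
    using cube_mean_noise_square_le[OF assms] by (intro mult_left_mono) auto
  then show ?case
    using Suc.IH[of "coord_avg n g"]
    by (simp add: cube_mean_noise_Suc_square cube_mean_Suc_square cube_mean_Suc_coord
        algebra_simps)
qed

text \<open>
  This is \<open>\<parallel>T\<^sub>\<sigma> h\<parallel>\<^sub>2\<^sub>m \<le> \<parallel>h\<parallel>\<^sub>2\<close> for \<open>h = T\<^sub>\<tau> g\<close>, using \<open>T\<^sub>\<sigma>\<^sub>\<tau> = T\<^sub>\<sigma> \<circ> T\<^sub>\<tau>\<close>; in this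
  form it goes through directly by induction on the dimension.
\<close>
lemma cube_mean_noise_hypercontractive:
  assumes "m \<ge> 1" and "\<sigma>\<^sup>2 * (2 * real m - 1) \<le> 1"
  shows "cube_mean n (\<lambda>y. (noise (\<sigma> * \<tau>) n g y) ^ (2 * m))
           \<le> (cube_mean n (\<lambda>y. (noise \<tau> n g y)\<^sup>2)) ^ m"
proof (induction n arbitrary: g)
  case 0
  show ?case by (simp add: cube_mean_0 noise_0 power_mult)
next
  case (Suc n)
  define A where "A = noise (\<sigma> * \<tau>) n (coord_avg n g)"
  define B where "B = noise (\<sigma> * \<tau>) n (coord_diff n g)"
  define P where "P = cube_mean n (\<lambda>y. (noise \<tau> n (coord_avg n g) y)\<^sup>2)"
  define Q where "Q = \<tau>\<^sup>2 * cube_mean n (\<lambda>y. (noise \<tau> n (coord_diff n g) y)\<^sup>2)"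
  have "cube_mean (Suc n) (\<lambda>z. (noise (\<sigma> * \<tau>) (Suc n) g z) ^ (2 * m))
      = cube_mean n (\<lambda>y. ((A y + \<sigma> * (\<tau> * B y)) ^ (2 * m)
                             + (A y - \<sigma> * (\<tau> * B y)) ^ (2 * m)) / 2)"
    unfolding cube_mean_noise_Suc[where F = "\<lambda>t. t ^ (2 * m)"]
    by (simp add: A_def B_def mult.assoc)
  also have "\<dots> \<le> cube_mean n (\<lambda>y. ((A y)\<^sup>2 + (\<tau> * B y)\<^sup>2) ^ m)"
    using two_point_hypercontractive[OF assms, of "A y" "\<tau> * B y" for y]
    by (intro cube_mean_mono) (simp add: field_simps)
  also have "\<dots> \<le> (P + Q) ^ m"
  proof -
    have "cube_mean n (\<lambda>y. ((A y)\<^sup>2) ^ m) \<le> P ^ m"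
      using Suc.IH[of "coord_avg n g"] by (simp add: A_def P_def power_mult)
    moreover have "cube_mean n (\<lambda>y. ((\<tau> * B y)\<^sup>2) ^ m) \<le> Q ^ m"
      using Suc.IH[of "coord_diff n g"]
      by (simp add: B_def Q_def power_mult_distrib power_mult cube_mean_mult_left
          mult_left_mono)
    ultimately show ?thesis
      unfolding cube_mean_eq_sum
      by (intro minkowski_power_sum[OF finite_cube assms(1)])
        (auto simp: P_def Q_def cube_mean_nonneg)
  qed
  also have "P + Q = cube_mean (Suc n) (\<lambda>z. (noise \<tau> (Suc n) g z)\<^sup>2)"
    by (simp add: P_def Q_def cube_mean_noise_Suc_square)
  finally show ?case .
qed

lemma cube_mean_noise_moment_le:
  assumes "k \<ge> 1" and "0 \<le> r" and "r * sqrt (2 * real k - 1) \<le> 1"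
    and "cube_mean n g = 0"
  shows "cube_mean n (\<lambda>y. (noise r n g y) ^ (2 * k))
           \<le> ((2 * real k - 1) * r\<^sup>2 * cube_mean n (\<lambda>x. (g x)\<^sup>2)) ^ k"
proof -
  define s where "s = sqrt (2 * real k - 1)"
  have s: "1 \<le> s" "s\<^sup>2 = 2 * real k - 1"
    using assms(1) by (auto simp: s_def)
  define \<tau> where "\<tau> = r * s"
  have \<tau>: "\<tau>\<^sup>2 \<le> 1"
    using assms(2,3) s(1) by (auto simp: \<tau>_def s_def intro: power_le_one)
  have "cube_mean n (\<lambda>y. (noise r n g y) ^ (2 * k))
      = cube_mean n (\<lambda>y. (noise (1 / s * \<tau>) n g y) ^ (2 * k))"
    using s(1) by (simp add: \<tau>_def)
  also have "\<dots> \<le> (cube_mean n (\<lambda>y. (noise \<tau> n g y)\<^sup>2)) ^ k"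
    using assms(1) s by (intro cube_mean_noise_hypercontractive) (auto simp: power_divide)
  also have "\<dots> \<le> (\<tau>\<^sup>2 * cube_mean n (\<lambda>x. (g x)\<^sup>2)) ^ k"
    using cube_mean_noise_square_le_variance[OF \<tau>, of n g] assms(4)
    by (intro power_mono) (auto intro: cube_mean_nonneg)
  also have "\<dots> = ((2 * real k - 1) * r\<^sup>2 * cube_mean n (\<lambda>x. (g x)\<^sup>2)) ^ k"
    using s(2) by (simp add: \<tau>_def power_mult_distrib)
  finally show ?thesis .
qed

section \<open>Conditional bias of a Boolean function\<close>

lemma joint_prob_eq_noise_weight:
  assumes "x \<in> cube n" and "y \<in> cube n"
  shows "joint_prob \<alpha> n x y = (\<Prod>i<n. noise_weight (1 - 2 * \<alpha>) (x i) (y i)) / 2 ^ n"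
proof -
  have "(if x i = y i then 1 - \<alpha> else \<alpha>) = noise_weight (1 - 2 * \<alpha>) (x i) (y i)" if "i < n" for i
  proof -
    have "x i \<in> {-1, 1}" "y i \<in> {-1, 1}"
      using assms that by (auto simp: cube_def)
    then show ?thesis by (auto simp: noise_weight_def)
  qed
  then have "(\<Prod>i<n. if x i = y i then 1 - \<alpha> else \<alpha>) = (\<Prod>i<n. noise_weight (1 - 2 * \<alpha>) (x i) (y i))"
    by (intro prod.cong) auto
  then show ?thesis
    by (simp add: joint_prob_def)
qed

lemma probY_eq:
  assumes "y \<in> cube n"
  shows "probY \<alpha> n y = 1 / 2 ^ n"
  using noise_const[of "1 - 2 * \<alpha>" n 1 y] assms
  by (simp add: probY_def noise_def joint_prob_eq_noise_weight sum_divide_distrib[symmetric]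
      cong: sum.cong)

lemma one_minus_two_condP_eq_noise:
  assumes "boolean_fun n f" and "y \<in> cube n"
  shows "1 - 2 * condP \<alpha> n f y = noise (1 - 2 * \<alpha>) n (\<lambda>x. of_int (f x)) y"
proof -
  define W where "W x = (\<Prod>i<n. noise_weight (1 - 2 * \<alpha>) (x i) (y i))" for x
  have f: "f x = -1 \<or> f x = 1" if "x \<in> cube n" for x
    using assms(1) that by (auto simp: boolean_fun_def)
  have "(\<Sum>x\<in>{x\<in>cube n. f x = -1}. joint_prob \<alpha> n x y) = (\<Sum>x\<in>{x\<in>cube n. f x = -1}. W x / 2 ^ n)"
    using assms(2) by (intro sum.cong) (auto simp: joint_prob_eq_noise_weight W_def)
  then have "condP \<alpha> n f y = (\<Sum>x\<in>{x\<in>cube n. f x = -1}. W x)"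
    using assms(2) by (simp add: condP_def probY_eq sum_divide_distrib[symmetric])
  also have "\<dots> = (\<Sum>x\<in>cube n. if f x = -1 then W x else 0)"
    by (simp add: sum.inter_filter finite_cube)
  finally have "1 - 2 * condP \<alpha> n f y
      = (\<Sum>x\<in>cube n. W x) - 2 * (\<Sum>x\<in>cube n. if f x = -1 then W x else 0)"
    using noise_const[of "1 - 2 * \<alpha>" n 1 y] by (simp add: noise_def W_def)
  also have "\<dots> = (\<Sum>x\<in>cube n. W x - 2 * (if f x = -1 then W x else 0))"
    by (simp add: sum_subtractf sum_distrib_left)
  also have "\<dots> = (\<Sum>x\<in>cube n. of_int (f x) * W x)"
  proof (rule sum.cong[OF refl])
    fix x assume "x \<in> cube n"
    then show "W x - 2 * (if f x = -1 then W x else 0) = of_int (f x) * W x"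
      using f[of x] by auto
  qed
  finally show ?thesis
    by (simp add: noise_def W_def)
qed

lemma boolean_fun_cube_mean_square:
  assumes "boolean_fun n f"
  shows "cube_mean n (\<lambda>x. (of_int (f x))\<^sup>2) = 1"
proof -
  have "(of_int (f x))\<^sup>2 = (1::real)" if "x \<in> cube n" for x
    using assms that by (auto simp: boolean_fun_def)
  then show ?thesis
    by (simp add: cube_mean_def card_cube cong: sum.cong)
qed

lemma balanced_cube_mean:
  assumes "boolean_fun n f" and "balanced n f"
  shows "cube_mean n (\<lambda>x. of_int (f x)) = 0"
proof -
  have "of_int (f x) = 1 - 2 * (if f x = -1 then 1 else 0 :: real)" if "x \<in> cube n" for x
    using assms(1) that by (auto simp: boolean_fun_def)
  then have "(\<Sum>x\<in>cube n. of_int (f x))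
      = real (card (cube n)) - 2 * real (card {x\<in>cube n. f x = -1})"
    by (simp add: sum_subtractf sum_distrib_left[symmetric] sum.inter_filter[symmetric] finite_cube
        cong: sum.cong)
  then show ?thesis
    using assms(2) by (simp add: cube_mean_def balanced_def card_cube field_simps)
qed

theorem lemma1:
  fixes \<alpha> :: real and n k :: nat and f :: "(nat \<Rightarrow> int) \<Rightarrow> int"
  assumes "0 \<le> \<alpha>" and "\<alpha> \<le> 1 / 2"
    and "k \<ge> 1"
    and "(1 - 2 * \<alpha>) * sqrt (2 * real k - 1) \<le> 1"
    and "boolean_fun n f"
    and "balanced n f"
  shows "(\<Sum>y\<in>cube n. probY \<alpha> n y * (1 - 2 * condP \<alpha> n f y) ^ (2 * k))
           \<le> (2 * real k - 1) ^ k * (1 - 2 * \<alpha>) ^ (2 * k)"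
proof -
  define F where "F = (\<lambda>x. real_of_int (f x))"
  have "(\<Sum>y\<in>cube n. probY \<alpha> n y * (1 - 2 * condP \<alpha> n f y) ^ (2 * k))
      = cube_mean n (\<lambda>y. (noise (1 - 2 * \<alpha>) n F y) ^ (2 * k))"
    unfolding cube_mean_eq_sum F_def
    by (intro sum.cong) (simp_all add: probY_eq one_minus_two_condP_eq_noise assms(5))
  also have "\<dots> \<le> ((2 * real k - 1) * (1 - 2 * \<alpha>)\<^sup>2 * cube_mean n (\<lambda>x. (F x)\<^sup>2)) ^ k"
    using assms balanced_cube_mean[OF assms(5,6)]
    by (intro cube_mean_noise_moment_le) (auto simp: F_def)
  also have "\<dots> = (2 * real k - 1) ^ k * (1 - 2 * \<alpha>) ^ (2 * k)"
    using boolean_fun_cube_mean_square[OF assms(5)]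
    by (simp add: F_def power_mult_distrib power_mult)
  finally show ?thesis .
qed

end
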